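(* Let $X$ and $Y$ be nonempty boundedly compact metric spaces (all closed balls are compact) with $d_{GH}(X,Y)<\infty$. Then $d^{us}_{GH}(X,Y)=d_{GH}(X,Y)$.
   Context: For a metric space, $|xy|$ denotes distance. A set-valued map $f:X\rightrightarrows Y$ assigns to each $x\in X$ a nonempty $f(x)\subseteq Y$ and is identified with its graph. A correspondence between $X$ and $Y$ is a subset $R\subseteq X\times Y$ whose projections to $X$ and to $Y$ are both surjective, regarded as the set-valued map $x\mapsto R(x)=\{y:(x,y)\in R\}$; $R^{-1}=\{(y,x):(x,y)\in R\}$; $\mathcal R(X,Y)$ is the set of all correspondences. The distortion of a nonempty $\sigma\subseteq X\times Y$ is $\operatorname{dis}\sigma=\sup\{||xx'|-|yy'||:(x,y),(x',y')\in\sigma\}\in[0,\infty]$, and $d_{GH}(X,Y)=\frac12\inf\{\operatorname{dis}R:R\in\mathcal R(X,Y)\}$. A set-valued map $f$ is upper semicontinuous if for every $x$ and every open $U\supseteq f(x)$ there is a neighborhood $V$ of $x$ with $f(x')\subseteq U$ for all $x'\in V$. $\mathcal R_{us}(X,Y)$ is the set of $R\in\mathcal R(X,Y)$ with both $R$ and $R^{-1}$ upper semicontinuous, and $d^{us}_{GH}(X,Y)=\frac12\inf\{\operatorname{dis}R:R\in\mathcal R_{us}(X,Y)\}$. *)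

theory Defs
  imports "HOL-Analysis.Analysis"
begin

text \<open>Metric spaces are modelled as subsets X of a type of class metric_space,
  carrying the restricted metric and the subspace topology.\<close>

definition boundedly_compact :: "'a::metric_space set \<Rightarrow> bool" where
  "boundedly_compact X \<longleftrightarrow> (\<forall>x\<in>X. \<forall>r. compact (cball x r \<inter> X))"

definition correspondences :: "'a set \<Rightarrow> 'b set \<Rightarrow> ('a \<times> 'b) set set" where
  "correspondences X Y = {R. R \<subseteq> X \<times> Y \<and> fst ` R = X \<and> snd ` R = Y}"

text \<open>Upper semicontinuity of a set-valued map f from X to Y given by its graph;
  f(x) = f `` {x}.\<close>
definition usc_setmap :: "'a::metric_space set \<Rightarrow> 'b::metric_space set \<Rightarrow> ('a \<times> 'b) set \<Rightarrow> bool" where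
  "usc_setmap X Y f \<longleftrightarrow>
     (\<forall>x\<in>X. \<forall>U. openin (top_of_set Y) U \<and> f `` {x} \<subseteq> U \<longrightarrow>
        (\<exists>V. open V \<and> x \<in> V \<and> (\<forall>x'\<in>V \<inter> X. f `` {x'} \<subseteq> U)))"

definition us_correspondences :: "'a::metric_space set \<Rightarrow> 'b::metric_space set \<Rightarrow> ('a \<times> 'b) set set" where
  "us_correspondences X Y =
     {R \<in> correspondences X Y. usc_setmap X Y R \<and> usc_setmap Y X (converse R)}"

definition distortion :: "('a::metric_space \<times> 'b::metric_space) set \<Rightarrow> ereal" where
  "distortion \<sigma> = Sup {ereal \<bar>dist x x' - dist y y'\<bar> | x y x' y'. (x, y) \<in> \<sigma> \<and> (x', y') \<in> \<sigma>}"

definition dGH :: "'a::metric_space set \<Rightarrow> 'b::metric_space set \<Rightarrow> ereal" where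
  "dGH X Y = Inf (distortion ` correspondences X Y) / 2"

definition dGH_us :: "'a::metric_space set \<Rightarrow> 'b::metric_space set \<Rightarrow> ereal" where
  "dGH_us X Y = Inf (distortion ` us_correspondences X Y) / 2"

end

theory Submission
  imports Defs
begin

text \<open>The closure in X \<times> Y of a correspondence R of finite distortion is again a
  correspondence, and its distortion is no larger because the distortion bound is a closed
  condition. It is upper semicontinuous in both directions: if x_n \<rightarrow> x and (x_n, y_n) lie in
  it, the distortion bound keeps the y_n in a closed ball of Y, which is compact, so a
  subsequence converges to some y with (x, y) in the closed relation.\<close>

lemma distortion_le_iff:
  "distortion \<sigma> \<le> e \<longleftrightarrow>
     (\<forall>(x, y)\<in>\<sigma>. \<forall>(x', y')\<in>\<sigma>. ereal \<bar>dist x x' - dist y y'\<bar> \<le> e)"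
  unfolding distortion_def Sup_le_iff by blast

lemma distortion_le_realD:
  assumes "distortion \<sigma> \<le> ereal c" "(x, y) \<in> \<sigma>" "(x', y') \<in> \<sigma>"
  shows "\<bar>dist x x' - dist y y'\<bar> \<le> c"
proof -
  have "ereal \<bar>dist x x' - dist y y'\<bar> \<le> distortion \<sigma>"
    unfolding distortion_def by (rule Sup_upper) (use assms(2,3) in blast)
  then show ?thesis
    using assms(1) by (metis order_trans ereal_less_eq(3))
qed

lemma distortion_mono: "\<sigma> \<subseteq> \<tau> \<Longrightarrow> distortion \<sigma> \<le> distortion \<tau>"
  unfolding distortion_def by (rule Sup_subset_mono) blast

lemma distortion_converse: "distortion (converse \<sigma>) = distortion \<sigma>"
proof -
  have "distortion (converse \<sigma>) \<le> e \<longleftrightarrow> distortion \<sigma> \<le> e" for e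
    unfolding distortion_le_iff by (force simp: abs_minus_commute)
  then show ?thesis
    by (metis order_refl antisym)
qed

lemma distortion_closure_le:
  fixes \<sigma> :: "('a::metric_space \<times> 'b::metric_space) set"
  shows "distortion (closure \<sigma>) \<le> distortion \<sigma>"
proof (rule ereal_le_real)
  fix c assume c: "distortion \<sigma> \<le> ereal c"
  define bounded_pairs :: "(('a \<times> 'b) \<times> ('a \<times> 'b)) set"
    where "bounded_pairs = {(p, q). \<bar>dist (fst p) (fst q) - dist (snd p) (snd q)\<bar> \<le> c}"
  have "\<sigma> \<times> \<sigma> \<subseteq> bounded_pairs"
    using c unfolding distortion_le_iff bounded_pairs_def by fastforce
  moreover have "closed bounded_pairs"
    unfolding bounded_pairs_def case_prod_beta by (intro closed_Collect_le continuous_intros)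
  ultimately have "closure \<sigma> \<times> closure \<sigma> \<subseteq> bounded_pairs"
    by (metis closure_Times closure_minimal)
  then show "distortion (closure \<sigma>) \<le> ereal c"
    unfolding distortion_le_iff bounded_pairs_def by fastforce
qed

lemma closed_converse:
  assumes "closed S" shows "closed (converse S)"
proof -
  have "converse S = (\<lambda>p. (snd p, fst p)) -` S"
    by force
  also have "closed \<dots>"
    using assms by (intro continuous_closed_vimage continuous_intros)
  finally show ?thesis .
qed

lemma closure_converse: "closure (converse S) = converse (closure S)"
proof (rule antisym)
  show "closure (converse S) \<subseteq> converse (closure S)"
    by (intro closure_minimal closed_converse closed_closure) (simp add: closure_subset)
  have "closure S \<subseteq> converse (closure (converse S))"
    by (intro closure_minimal closed_converse closed_closure)
       (metis closure_subset converse_converse converse_mono)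
  then show "converse (closure S) \<subseteq> closure (converse S)"
    by (simp add: converse_subset_swap)
qed

lemma usc_setmap_sequentially:
  assumes R: "R \<subseteq> X \<times> Y"
    and subseq: "\<And>s x. (\<And>n. s n \<in> R) \<Longrightarrow> (\<lambda>n. fst (s n)) \<longlonglongrightarrow> x \<Longrightarrow> x \<in> X \<Longrightarrow>
      \<exists>y r. (x, y) \<in> R \<and> strict_mono r \<and> (\<lambda>n. snd (s (r n))) \<longlonglongrightarrow> y"
  shows "usc_setmap X Y R"
  unfolding usc_setmap_def
proof (intro ballI allI impI, elim conjE)
  fix x U assume x: "x \<in> X" and U: "openin (top_of_set Y) U" and Rx: "R `` {x} \<subseteq> U"
  show "\<exists>V. open V \<and> x \<in> V \<and> (\<forall>x'\<in>V \<inter> X. R `` {x'} \<subseteq> U)"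
  proof (rule ccontr)
    assume "\<not> ?thesis"
    then have "\<forall>x'\<in>ball x (inverse (Suc n)) \<inter> X. R `` {x'} \<subseteq> U \<Longrightarrow> False" for n :: nat
      by (metis centre_in_ball inverse_positive_iff_positive of_nat_0_less_iff open_ball zero_less_Suc)
    then have "\<exists>p\<in>R. dist (fst p) x < inverse (Suc n) \<and> snd p \<notin> U" for n :: nat
      by (fastforce simp: dist_commute)
    then obtain s where s: "\<And>n. s n \<in> R" "\<And>n. dist (fst (s n)) x < inverse (Suc n)"
      "\<And>n. snd (s n) \<notin> U"
      by metis
    have "(\<lambda>n. dist (fst (s n)) x) \<longlonglongrightarrow> 0"
      by (rule Lim_null_comparison[OF _ LIMSEQ_inverse_real_of_nat])
         (use s(2) in \<open>auto intro: less_imp_le always_eventually\<close>)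
    then have "(\<lambda>n. fst (s n)) \<longlonglongrightarrow> x"
      by (rule tendsto_dist_iff[THEN iffD2])
    then obtain y r where "(x, y) \<in> R" and snd_s: "(\<lambda>n. snd (s (r n))) \<longlonglongrightarrow> y"
      using subseq s(1) x by blast
    obtain T where T: "open T" "U = Y \<inter> T"
      using U unfolding openin_open by blast
    have "y \<in> T"
      using \<open>(x, y) \<in> R\<close> Rx T(2) by blast
    then have "\<forall>\<^sub>F n in sequentially. snd (s (r n)) \<in> T"
      by (rule topological_tendstoD[OF snd_s T(1)])
    then obtain N where "snd (s (r N)) \<in> T"
      unfolding eventually_sequentially by auto
    moreover have "snd (s (r N)) \<in> Y"
      using subsetD[OF R s(1)[of "r N"]] by (simp add: mem_Times_iff)
    ultimately show False
      using s(3)[of "r N"] T(2) by blast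
  qed
qed

lemma usc_setmap_if_closed_finite_distortion:
  assumes R: "R \<subseteq> X \<times> Y" "X \<subseteq> fst ` R" and closed: "closure R \<inter> X \<times> Y \<subseteq> R"
    and Y: "boundedly_compact Y" and fin: "distortion R < \<infinity>"
  shows "usc_setmap X Y R"
proof (rule usc_setmap_sequentially[OF R(1)])
  fix s x assume s: "\<And>n. s n \<in> R" and fst_s: "(\<lambda>n. fst (s n)) \<longlonglongrightarrow> x" and x: "x \<in> X"
  obtain y0 where y0: "(x, y0) \<in> R"
    using x R(2) by force
  obtain c where c: "distortion R \<le> ereal c"
    using fin by (cases "distortion R") auto
  obtain B where B: "\<And>n. dist x (fst (s n)) \<le> B"
    using convergent_imp_bounded[OF fst_s] unfolding bounded_any_center[of _ x] by auto
  have "(snd \<circ> s) n \<in> cball y0 (B + c) \<inter> Y" for n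
  proof -
    have "\<bar>dist x (fst (s n)) - dist y0 (snd (s n))\<bar> \<le> c"
      using distortion_le_realD[OF c y0, of "fst (s n)" "snd (s n)"] s[of n] by simp
    moreover have "snd (s n) \<in> Y"
      using subsetD[OF R(1) s[of n]] by (simp add: mem_Times_iff)
    ultimately show ?thesis
      using B[of n] by simp
  qed
  moreover have "compact (cball y0 (B + c) \<inter> Y)"
    using Y y0 R(1) unfolding boundedly_compact_def by blast
  ultimately obtain y r where y: "y \<in> Y" and r: "strict_mono r"
    and snd_s: "(snd \<circ> s \<circ> r) \<longlonglongrightarrow> y"
    by (metis IntE seq_compactE compact_imp_seq_compact)
  have "(fst \<circ> s \<circ> r) \<longlonglongrightarrow> x"
    using LIMSEQ_subseq_LIMSEQ[OF fst_s r] by (simp add: comp_def)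
  from tendsto_Pair[OF this snd_s] have "(s \<circ> r) \<longlonglongrightarrow> (x, y)"
    by (simp add: comp_def)
  then have "(x, y) \<in> closure R"
    unfolding closure_sequential using s by (metis comp_apply)
  then have "(x, y) \<in> R"
    using closed x y by blast
  then show "\<exists>y r. (x, y) \<in> R \<and> strict_mono r \<and> (\<lambda>n. snd (s (r n))) \<longlonglongrightarrow> y"
    using r snd_s by (auto simp: comp_def)
qed

lemma correspondences_between:
  assumes "R \<in> correspondences X Y" "R \<subseteq> R'" "R' \<subseteq> X \<times> Y"
  shows "R' \<in> correspondences X Y"
proof -
  have "X \<subseteq> fst ` R'" "Y \<subseteq> snd ` R'"
    using assms(1,2) unfolding correspondences_def by auto
  moreover have "fst ` R' \<subseteq> X" "snd ` R' \<subseteq> Y"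
    using assms(3) by auto
  ultimately show ?thesis
    using assms(3) unfolding correspondences_def by blast
qed

lemma closure_in_us_correspondences:
  assumes R: "R \<in> correspondences X Y" and X: "boundedly_compact X" and Y: "boundedly_compact Y"
    and fin: "distortion R < \<infinity>"
  shows "closure R \<inter> X \<times> Y \<in> us_correspondences X Y"
    and "distortion (closure R \<inter> X \<times> Y) \<le> distortion R"
proof -
  define R' where "R' = closure R \<inter> X \<times> Y"
  have "R \<subseteq> R'"
    using R closure_subset unfolding R'_def correspondences_def by blast
  then have R': "R' \<in> correspondences X Y"
    by (intro correspondences_between[OF R]) (simp_all add: R'_def)
  show dist_R': "distortion R' \<le> distortion R"
    unfolding R'_def by (meson distortion_closure_le distortion_mono inf_le1 order_trans)
  then have fin': "distortion R' < \<infinity>"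
    using fin by (rule le_less_trans)
  have closed: "closure R' \<inter> X \<times> Y \<subseteq> R'"
    unfolding R'_def by (metis closure_closure closure_mono inf_le1 inf_mono order_refl)
  have "usc_setmap X Y R'"
    using R' closed Y fin'
    by (intro usc_setmap_if_closed_finite_distortion) (auto simp: correspondences_def)
  moreover have "usc_setmap Y X (converse R')"
  proof (rule usc_setmap_if_closed_finite_distortion)
    show "converse R' \<subseteq> Y \<times> X" "Y \<subseteq> fst ` converse R'"
      using R' unfolding correspondences_def by (auto simp: fst_eq_Domain snd_eq_Range)
    show "closure (converse R') \<inter> Y \<times> X \<subseteq> converse R'"
      using closed by (auto simp: closure_converse)
    show "distortion (converse R') < \<infinity>"
      unfolding distortion_converse by (fact fin')
  qed (fact X)
  ultimately show "R' \<in> us_correspondences X Y"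
    using R' unfolding us_correspondences_def by blast
qed

lemma Inf_distortion_us_correspondences:
  assumes "boundedly_compact X" "boundedly_compact Y"
  shows "Inf (distortion ` us_correspondences X Y) = Inf (distortion ` correspondences X Y)"
proof (rule antisym)
  show "Inf (distortion ` us_correspondences X Y) \<le> Inf (distortion ` correspondences X Y)"
  proof (rule Inf_greatest, clarify)
    fix R assume R: "R \<in> correspondences X Y"
    show "Inf (distortion ` us_correspondences X Y) \<le> distortion R"
    proof (cases "distortion R < \<infinity>")
      case True
      then show ?thesis
        using closure_in_us_correspondences[OF R assms] by (meson INF_lower2)
    qed simp
  qed
  show "Inf (distortion ` correspondences X Y) \<le> Inf (distortion ` us_correspondences X Y)"
    unfolding us_correspondences_def by (intro Inf_superset_mono) auto
qed

theorem mainTheorem9: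
  fixes X :: "'a::metric_space set" and Y :: "'b::metric_space set"
  assumes "X \<noteq> {}" and "Y \<noteq> {}"
    and "boundedly_compact X" and "boundedly_compact Y"
    and "dGH X Y < \<infinity>"
  shows "dGH_us X Y = dGH X Y"
  unfolding dGH_us_def dGH_def Inf_distortion_us_correspondences[OF assms(3,4)] ..

end
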